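(* Let $\alpha,\beta\in(0,1]$, and let $L(t,u,v,w):\mathbb{T}^\kappa\times\mathbb{R}^3\to\mathbb{R}$ have continuous second-order partial derivatives in $(u,v,w)$. Consider the problem $$\mathcal{L}(y)=\int_a^bL\bigl(t,y(\sigma(t)),({}_a\Delta_h^\alpha y)(t),({}_h\Delta_b^\beta y)(t)\bigr)\Delta t\to\min,\qquad y(a)=A,\ y(b)=B,$$ over $y:\mathbb{T}\to\mathbb{R}$. If $\hat y$ is a local minimizer, then for all $t\in\mathbb{T}^{\kappa^2}$, $$L_u[\hat y](t)+\bigl({}_h\Delta_{\rho(b)}^{\alpha}L_v[\hat y]\bigr)(t)+\bigl({}_a\Delta_h^{\beta}L_w[\hat y]\bigr)(t)=0,$$ where $[y](s)=(s,y(\sigma(s)),({}_a\Delta_h^\alpha y)(s),({}_h\Delta_b^\beta y)(s))$ and $L_v[\hat y]$, $L_w[\hat y]$ are the functions $s\mapsto L_v([\hat y](s))$, $s\mapsto L_w([\hat y](s))$ on $\mathbb{T}^\kappa$.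
   Context: Let $a\in\mathbb{R}$, $h>0$, $b=a+kh$ with $k\in\mathbb{N}$, $k\ge2$, $\mathbb{T}=\{a,a+h,\dots,b\}$, $\mathbb{T}^\kappa=\mathbb{T}\setminus\{b\}$, $\mathbb{T}^{\kappa^2}=\mathbb{T}\setminus\{b-h,b\}$, $\sigma(t)=t+h$, $\rho(t)=t-h$, $G^\Delta(t)=(G(t+h)-G(t))/h$; $\int_c^dG(s)\Delta s:=h\sum_{j=0}^{(d-c)/h-1}G(c+jh)$ for $c\le d$. $h$-factorial: $x_h^{(y)}:=h^y\Gamma(\frac{x}{h}+1)/\Gamma(\frac{x}{h}+1-y)$ (division at a pole yields zero). For $\nu\ge0$, $c\in\mathbb{T}$, $G$ on $\{s\in\mathbb{T}:s\le c\}$, $t\le c$: $({}_a\Delta_h^{-\nu}G)(t+\nu h):=h^\nu G(t)+\frac{\nu}{\Gamma(\nu+1)}\int_a^t(t+\nu h-\sigma(s))_h^{(\nu-1)}G(s)\Delta s$ and $({}_h\Delta_c^{-\nu}G)(t-\nu h):=h^\nu G(t)+\frac{\nu}{\Gamma(\nu+1)}\int_{\sigma(t)}^{\sigma(c)}(s+\nu h-\sigma(t))_h^{(\nu-1)}G(s)\Delta s$. For $0<\alpha\le1$, $\gamma=1-\alpha$, $t<c$: $({}_a\Delta_h^{\alpha}G)(t):=[\tau\mapsto({}_a\Delta_h^{-\gamma}G)(\tau+\gamma h)]^\Delta(t)$, $({}_h\Delta_c^{\alpha}G)(t):=-[\tau\mapsto({}_h\Delta_c^{-\gamma}G)(\tau-\gamma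 h)]^\Delta(t)$. Norm: $\|y\|=\max_{t\in\mathbb{T}^\kappa}|y(\sigma(t))|+\max_{t\in\mathbb{T}^\kappa}|({}_a\Delta_h^\alpha y)(t)|+\max_{t\in\mathbb{T}^\kappa}|({}_h\Delta_b^\beta y)(t)|$. $\hat y$ with $\hat y(a)=A$, $\hat y(b)=B$ is a local minimizer if for some $\delta>0$, $\mathcal{L}(\hat y)\le\mathcal{L}(y)$ for all $y$ with $y(a)=A$, $y(b)=B$, $\|y-\hat y\|<\delta$. *)

theory Defs
  imports "HOL-Analysis.Analysis"
begin

text \<open>Discrete time scale T = {a, a+h, ..., a+kh}, b = a + k h.\<close>

definition tscale :: "real \<Rightarrow> real \<Rightarrow> nat \<Rightarrow> real set" where
  "tscale a h k = {a + real j * h | j. j \<le> k}"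

definition tscale_k :: "real \<Rightarrow> real \<Rightarrow> nat \<Rightarrow> real set" where
  "tscale_k a h k = {a + real j * h | j. j < k}"

definition tscale_k2 :: "real \<Rightarrow> real \<Rightarrow> nat \<Rightarrow> real set" where
  "tscale_k2 a h k = {a + real j * h | j. j + 2 \<le> k}"

text \<open>h-factorial; Isabelle's Gamma is 0 at its poles and x / 0 = 0, so a pole in the
  denominator yields zero.\<close>
definition hfact :: "real \<Rightarrow> real \<Rightarrow> real \<Rightarrow> real" where
  "hfact h x y = h powr y * Gamma (x / h + 1) / Gamma (x / h + 1 - y)"

definition dint :: "real \<Rightarrow> real \<Rightarrow> real \<Rightarrow> (real \<Rightarrow> real) \<Rightarrow> real" where
  "dint h c d G = h * (\<Sum>j < nat \<lfloor>(d - c) / h\<rfloor>. G (c + real j * h))"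

text \<open>lfsum a h nu G t  =  (a Delta_h^{-nu} G)(t + nu h).\<close>
definition lfsum :: "real \<Rightarrow> real \<Rightarrow> real \<Rightarrow> (real \<Rightarrow> real) \<Rightarrow> real \<Rightarrow> real" where
  "lfsum a h \<nu> G t = h powr \<nu> * G t
     + \<nu> / Gamma (\<nu> + 1) * dint h a t (\<lambda>s. hfact h (t + \<nu> * h - (s + h)) (\<nu> - 1) * G s)"

text \<open>rfsum h c nu G t  =  (h Delta_c^{-nu} G)(t - nu h).\<close>
definition rfsum :: "real \<Rightarrow> real \<Rightarrow> real \<Rightarrow> (real \<Rightarrow> real) \<Rightarrow> real \<Rightarrow> real" where
  "rfsum h c \<nu> G t = h powr \<nu> * G t
     + \<nu> / Gamma (\<nu> + 1) * dint h (t + h) (c + h) (\<lambda>s. hfact h (s + \<nu> * h - (t + h)) (\<nu> - 1) * G s)"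

definition lfdiff :: "real \<Rightarrow> real \<Rightarrow> real \<Rightarrow> (real \<Rightarrow> real) \<Rightarrow> real \<Rightarrow> real" where
  "lfdiff a h \<alpha> G t = (lfsum a h (1 - \<alpha>) G (t + h) - lfsum a h (1 - \<alpha>) G t) / h"

definition rfdiff :: "real \<Rightarrow> real \<Rightarrow> real \<Rightarrow> (real \<Rightarrow> real) \<Rightarrow> real \<Rightarrow> real" where
  "rfdiff h c \<alpha> G t = - ((rfsum h c (1 - \<alpha>) G (t + h) - rfsum h c (1 - \<alpha>) G t) / h)"

definition ynorm :: "real \<Rightarrow> real \<Rightarrow> nat \<Rightarrow> real \<Rightarrow> real \<Rightarrow> (real \<Rightarrow> real) \<Rightarrow> real" where
  "ynorm a h k \<alpha> \<beta> y =
     Max ((\<lambda>t. \<bar>y (t + h)\<bar>) ` tscale_k a h k)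
   + Max ((\<lambda>t. \<bar>lfdiff a h \<alpha> y t\<bar>) ` tscale_k a h k)
   + Max ((\<lambda>t. \<bar>rfdiff h (a + real k * h) \<beta> y t\<bar>) ` tscale_k a h k)"

definition Lfun :: "real \<Rightarrow> real \<Rightarrow> nat \<Rightarrow> real \<Rightarrow> real \<Rightarrow>
    (real \<Rightarrow> real \<Rightarrow> real \<Rightarrow> real \<Rightarrow> real) \<Rightarrow> (real \<Rightarrow> real) \<Rightarrow> real" where
  "Lfun a h k \<alpha> \<beta> L y = dint h a (a + real k * h)
     (\<lambda>t. L t (y (t + h)) (lfdiff a h \<alpha> y t) (rfdiff h (a + real k * h) \<beta> y t))"

definition loc_min :: "real \<Rightarrow> real \<Rightarrow> nat \<Rightarrow> real \<Rightarrow> real \<Rightarrow>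
    (real \<Rightarrow> real \<Rightarrow> real \<Rightarrow> real \<Rightarrow> real) \<Rightarrow> real \<Rightarrow> real \<Rightarrow> (real \<Rightarrow> real) \<Rightarrow> bool" where
  "loc_min a h k \<alpha> \<beta> L A B yh \<longleftrightarrow>
     yh a = A \<and> yh (a + real k * h) = B \<and>
     (\<exists>\<delta>>0. \<forall>y. y a = A \<longrightarrow> y (a + real k * h) = B \<longrightarrow>
        ynorm a h k \<alpha> \<beta> (\<lambda>t. y t - yh t) < \<delta> \<longrightarrow> Lfun a h k \<alpha> \<beta> L yh \<le> Lfun a h k \<alpha> \<beta> L y)"

definition pd :: "('a::euclidean_space \<Rightarrow> real) \<Rightarrow> 'a \<Rightarrow> 'a \<Rightarrow> real" where
  "pd g i p = deriv (\<lambda>x. g (p + x *\<^sub>R i)) 0"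

definition C2 :: "('a::euclidean_space \<Rightarrow> real) \<Rightarrow> bool" where
  "C2 g \<longleftrightarrow> continuous_on UNIV g \<and>
     (\<forall>i\<in>Basis. (\<forall>p. (\<lambda>x. g (p + x *\<^sub>R i)) differentiable (at 0)) \<and>
        continuous_on UNIV (pd g i) \<and>
        (\<forall>j\<in>Basis. (\<forall>p. (\<lambda>x. pd g i (p + x *\<^sub>R j)) differentiable (at 0)) \<and>
           continuous_on UNIV (pd (pd g i) j)))"

definition uncurry3 :: "(real \<Rightarrow> real \<Rightarrow> real \<Rightarrow> real) \<Rightarrow> real \<times> real \<times> real \<Rightarrow> real" where
  "uncurry3 f p = f (fst p) (fst (snd p)) (snd (snd p))"

definition Lu :: "(real \<Rightarrow> real \<Rightarrow> real \<Rightarrow> real \<Rightarrow> real) \<Rightarrow> real \<Rightarrow> real \<Rightarrow> real \<Rightarrow> real \<Rightarrow> real" where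
  "Lu L t u v w = pd (uncurry3 (L t)) (1, 0, 0) (u, v, w)"
definition Lv :: "(real \<Rightarrow> real \<Rightarrow> real \<Rightarrow> real \<Rightarrow> real) \<Rightarrow> real \<Rightarrow> real \<Rightarrow> real \<Rightarrow> real \<Rightarrow> real" where
  "Lv L t u v w = pd (uncurry3 (L t)) (0, 1, 0) (u, v, w)"
definition Lw :: "(real \<Rightarrow> real \<Rightarrow> real \<Rightarrow> real \<Rightarrow> real) \<Rightarrow> real \<Rightarrow> real \<Rightarrow> real \<Rightarrow> real \<Rightarrow> real" where
  "Lw L t u v w = pd (uncurry3 (L t)) (0, 0, 1) (u, v, w)"

end

theory Submission
  imports Defs
begin

(* Strategy: the classical first-variation argument, carried out on the grid
   t_n = a + n h.
   1. On the grid, the fractional h-sums are finite convolutions with explicit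
      weights (frac_weight); the difference operators are differences of two
      such convolutions.
   2. For the unit impulse eta at t_(j+1), a summation by parts turns
      sum_n (a Delta^alpha eta)(t_n) V(t_n) into the right fractional difference
      of V at t_j, and dually for the right difference; this is the discrete
      fractional integration by parts, specialised to impulses.
   3. For C2 integrands, eps |-> L(y + eps eta) is differentiable at 0 with
      derivative the first variation (chain rule from continuous partials).
   4. At a local minimiser every admissible variation has vanishing first
      variation (Fermat's rule).  Choosing eta = impulse at t_(j+1) and applying
      step 2 yields the Euler-Lagrange expression at t_j, which must vanish. *)

lemma dint_grid:
  assumes "h > 0"
  shows "dint h c (c + real n * h) G = h * (\<Sum>j<n. G (c + real j * h))"
  using assms by (simp add: dint_def)

(* Weight of G(t_(n-m)) in the left fractional sum at t_n; by symmetry also the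
   weight of G(t_(n+m)) in the right fractional sum at t_n. *)
definition frac_weight :: "real \<Rightarrow> real \<Rightarrow> nat \<Rightarrow> real" where
  "frac_weight h \<nu> m =
     (if m = 0 then h powr \<nu>
      else h * (\<nu> / Gamma (\<nu> + 1)) * hfact h ((real m + \<nu> - 1) * h) (\<nu> - 1))"

lemma frac_weight_kernel:
  assumes "j < n"
  shows "\<nu> / Gamma (\<nu> + 1) * (h * hfact h (x + real n * h + \<nu> * h - (x + real j * h + h)) (\<nu> - 1))
         = frac_weight h \<nu> (n - j)"
proof -
  have "x + real n * h + \<nu> * h - (x + real j * h + h) = (real (n - j) + \<nu> - 1) * h"
    using assms by (simp add: of_nat_diff algebra_simps)
  then show ?thesis using assms by (simp add: frac_weight_def)
qed

lemma lfsum_grid: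
  assumes h: "h > 0"
  shows "lfsum a h \<nu> F (a + real n * h) = (\<Sum>j\<le>n. frac_weight h \<nu> (n - j) * F (a + real j * h))"
proof -
  let ?t = "\<lambda>n. a + real n * h"
  let ?K = "\<lambda>j. hfact h (?t n + \<nu> * h - (?t j + h)) (\<nu> - 1)"
  have "lfsum a h \<nu> F (?t n)
      = h powr \<nu> * F (?t n) + (\<Sum>j<n. \<nu> / Gamma (\<nu> + 1) * (h * (?K j * F (?t j))))"
    unfolding lfsum_def dint_grid[OF h] sum_distrib_left ..
  also have "\<dots> = frac_weight h \<nu> (n - n) * F (?t n) + (\<Sum>j<n. frac_weight h \<nu> (n - j) * F (?t j))"
  proof (intro arg_cong2[where f = "(+)"] sum.cong)
    fix j assume "j \<in> {..<n}"
    then show "\<nu> / Gamma (\<nu> + 1) * (h * (?K j * F (?t j))) = frac_weight h \<nu> (n - j) * F (?t j)"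
      by (subst frac_weight_kernel[symmetric]) (simp_all only: mult.assoc lessThan_iff)
  qed (simp_all add: frac_weight_def)
  finally show ?thesis by (simp add: lessThan_Suc_atMost[symmetric])
qed

lemma sum_atLeastAtMost_first:
  assumes "n \<le> N"
  shows "(\<Sum>j=n..N. f j) = f n + (\<Sum>j<N - n. f (n + Suc j))"
proof -
  have "(\<Sum>j=n..N. f j) = (\<Sum>j<Suc (N - n). f (n + j))"
    using assms by (simp add: sum.atLeastAtMost_shift_0 atLeast0AtMost lessThan_Suc_atMost add.commute)
  also have "\<dots> = f (n + 0) + (\<Sum>j<N - n. f (n + Suc j))"
    by (rule sum.lessThan_Suc_shift)
  finally show ?thesis by simp
qed

lemma rfsum_grid:
  assumes h: "h > 0" and nN: "n \<le> N"
  shows "rfsum h (a + real N * h) \<nu> F (a + real n * h)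
       = (\<Sum>j=n..N. frac_weight h \<nu> (j - n) * F (a + real j * h))"
proof -
  let ?t = "a + real n * h"
  have upper: "a + real N * h + h = (?t + h) + real (N - n) * h"
    using nN by (simp add: of_nat_diff algebra_simps)
  let ?K = "\<lambda>j. hfact h (?t + h + real j * h + \<nu> * h - (?t + h)) (\<nu> - 1)"
  have "rfsum h (a + real N * h) \<nu> F ?t
      = h powr \<nu> * F ?t + (\<Sum>j<N - n. \<nu> / Gamma (\<nu> + 1) * (h * (?K j * F (?t + h + real j * h))))"
    unfolding rfsum_def upper dint_grid[OF h] sum_distrib_left ..
  also have "\<dots> = frac_weight h \<nu> (n - n) * F ?t
      + (\<Sum>j<N - n. frac_weight h \<nu> (n + Suc j - n) * F (a + real (n + Suc j) * h))"
  proof (intro arg_cong2[where f = "(+)"] sum.cong)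
    fix j
    have "?t + h + real j * h = ?t + real (Suc j) * h" "?t + h = ?t + real 0 * h + h"
      by (simp_all add: algebra_simps)
    then show "\<nu> / Gamma (\<nu> + 1) * (h * (?K j * F (?t + h + real j * h)))
      = frac_weight h \<nu> (n + Suc j - n) * F (a + real (n + Suc j) * h)"
      using frac_weight_kernel[of 0 "Suc j" \<nu> h ?t]
      by (simp only: mult.assoc[symmetric]) (simp add: algebra_simps)
  qed (simp_all add: frac_weight_def)
  finally show ?thesis by (simp add: sum_atLeastAtMost_first[OF nN])
qed

definition impulse :: "real \<Rightarrow> real \<Rightarrow> nat \<Rightarrow> real \<Rightarrow> real" where
  "impulse a h i t = (if t = a + real i * h then 1 else 0)"

lemma impulse_grid:
  assumes "h > 0"
  shows "impulse a h i (a + real m * h) = (if m = i then 1 else 0)"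
  using assms by (simp add: impulse_def)

lemma lfsum_impulse:
  assumes h: "h > 0"
  shows "lfsum a h \<nu> (impulse a h i) (a + real m * h)
       = (if i \<le> m then frac_weight h \<nu> (m - i) else 0)"
  unfolding lfsum_grid[OF h] impulse_grid[OF h]
  by (simp add: if_distrib[where f = "\<lambda>x. _ * x"] sum.delta cong: if_cong)

lemma rfsum_impulse:
  assumes h: "h > 0" and "m \<le> N"
  shows "rfsum h (a + real N * h) \<nu> (impulse a h i) (a + real m * h)
       = (if m \<le> i \<and> i \<le> N then frac_weight h \<nu> (i - m) else 0)"
  unfolding rfsum_grid[OF assms] impulse_grid[OF h]
  by (simp add: if_distrib[where f = "\<lambda>x. _ * x"] sum.delta cong: if_cong)

lemma sum_lessThan_if_ge:
  "(\<Sum>n<k. if (m::nat) \<le> n then f n else 0) = (\<Sum>n=m..<k. f n)"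
proof -
  have "(\<Sum>n<k. if m \<le> n then f n else 0) = sum f {n \<in> {..<k}. m \<le> n}"
    using sum.inter_filter[of "{..<k}" f "\<lambda>n. m \<le> n"] by simp
  also have "{n \<in> {..<k}. m \<le> n} = {m..<k}" by auto
  finally show ?thesis .
qed

lemma sum_lessThan_if_le:
  assumes "m < (k::nat)"
  shows "(\<Sum>n<k. if n \<le> m then f n else 0) = (\<Sum>n\<le>m. f n)"
proof -
  have "(\<Sum>n<k. if n \<le> m then f n else 0) = sum f {n \<in> {..<k}. n \<le> m}"
    using sum.inter_filter[of "{..<k}" f "\<lambda>n. n \<le> m"] by simp
  also have "{n \<in> {..<k}. n \<le> m} = {..m}" using assms by auto
  finally show ?thesis .
qed

lemma impulse_shift_sum:
  assumes h: "h > 0" and j: "j < k"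
  shows "(\<Sum>n<k. impulse a h (Suc j) (a + real n * h + h) * U (a + real n * h))
       = U (a + real j * h)"
proof -
  have "impulse a h (Suc j) (a + real n * h + h) = (if n = j then 1 else 0)" for n
    using impulse_grid[OF h, of a "Suc j" "Suc n"] by (simp add: algebra_simps)
  then show ?thesis
    using j by (simp add: if_distrib[where f = "\<lambda>x. x * _"] sum.delta cong: if_cong)
qed

(* The left fractional difference moves onto V as the right fractional difference
   with end point b - h; both sides reduce to the same two truncated convolutions. *)
lemma impulse_lfdiff_sum:
  assumes h: "h > 0" and j: "Suc j < k"
  shows "(\<Sum>n<k. lfdiff a h \<alpha> (impulse a h (Suc j)) (a + real n * h) * V (a + real n * h))
       = rfdiff h (a + real k * h - h) \<alpha> V (a + real j * h)"
proof -
  let ?W = "frac_weight h (1 - \<alpha>)" and ?t = "\<lambda>n. a + real n * h"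
  let ?R = "rfsum h (a + real (k - 1) * h) (1 - \<alpha>) V"
  have step: "?t n + h = ?t (Suc n)" for n by (simp add: algebra_simps)
  have R: "?R (?t m) = (\<Sum>n=m..<k. ?W (n - m) * V (?t n))" if "m < k" for m
  proof -
    have "{m..<k} = {m..k - 1}" using that by auto
    then show ?thesis using rfsum_grid[OF h, of m "k - 1"] that by simp
  qed
  have "lfdiff a h \<alpha> (impulse a h (Suc j)) (?t n)
      = ((if j \<le> n then ?W (n - j) else 0) - (if Suc j \<le> n then ?W (n - Suc j) else 0)) / h" for n
    unfolding lfdiff_def step lfsum_impulse[OF h] by simp
  then have "(\<Sum>n<k. lfdiff a h \<alpha> (impulse a h (Suc j)) (?t n) * V (?t n))
      = (\<Sum>n<k. ((if j \<le> n then ?W (n - j) * V (?t n) else 0)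
                 - (if Suc j \<le> n then ?W (n - Suc j) * V (?t n) else 0)) / h)"
    by (simp add: diff_divide_distrib left_diff_distrib if_distrib[where f = "\<lambda>x. x * _"]
        cong: if_cong)
  also have "\<dots> = (?R (?t j) - ?R (?t (Suc j))) / h"
    unfolding R[OF Suc_lessD[OF j]] R[OF j] sum_divide_distrib[symmetric] sum_subtractf
      sum_lessThan_if_ge ..
  also have "\<dots> = rfdiff h (a + real k * h - h) \<alpha> V (?t j)"
    using j by (simp add: rfdiff_def step of_nat_diff algebra_simps diff_divide_distrib)
  finally show ?thesis .
qed

lemma impulse_rfdiff_sum:
  assumes h: "h > 0" and j: "Suc j < k"
  shows "(\<Sum>n<k. rfdiff h (a + real k * h) \<beta> (impulse a h (Suc j)) (a + real n * h)
                  * Z (a + real n * h))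
       = lfdiff a h \<beta> Z (a + real j * h)"
proof -
  let ?W = "frac_weight h (1 - \<beta>)" and ?t = "\<lambda>n. a + real n * h"
  let ?S = "lfsum a h (1 - \<beta>) Z"
  have step: "?t n + h = ?t (Suc n)" for n by (simp add: algebra_simps)
  have "rfdiff h (a + real k * h) \<beta> (impulse a h (Suc j)) (?t n)
      = ((if n \<le> Suc j then ?W (Suc j - n) else 0) - (if n \<le> j then ?W (j - n) else 0)) / h"
    if "n < k" for n
    unfolding rfdiff_def step
    using rfsum_impulse[OF h, of "Suc n" k] rfsum_impulse[OF h, of n k] j that
    by (simp add: diff_divide_distrib)
  then have "(\<Sum>n<k. rfdiff h (a + real k * h) \<beta> (impulse a h (Suc j)) (?t n) * Z (?t n))
      = (\<Sum>n<k. ((if n \<le> Suc j then ?W (Suc j - n) * Z (?t n) else 0)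
                 - (if n \<le> j then ?W (j - n) * Z (?t n) else 0)) / h)"
    by (intro sum.cong)
      (simp_all add: diff_divide_distrib left_diff_distrib if_distrib[where f = "\<lambda>x. x * _"]
        cong: if_cong)
  also have "\<dots> = (?S (?t (Suc j)) - ?S (?t j)) / h"
    unfolding lfsum_grid[OF h] sum_divide_distrib[symmetric] sum_subtractf
      sum_lessThan_if_le[OF j] sum_lessThan_if_le[OF Suc_lessD[OF j]] ..
  also have "\<dots> = lfdiff a h \<beta> Z (?t j)"
    by (simp add: lfdiff_def step)
  finally show ?thesis .
qed

lemma diagonal_derivative:
  fixes f D :: "real \<Rightarrow> real \<Rightarrow> real"
  assumes A: "((\<lambda>x. f x 0) has_real_derivative A) (at 0)"
    and D: "\<And>x s. ((\<lambda>s. f x s) has_real_derivative D x s) (at s)"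
    and C: "isCont (\<lambda>z. D (fst z) (snd z)) (0, 0)"
  shows "((\<lambda>x. f x (c * x)) has_real_derivative A + c * D 0 0) (at 0)"
proof -
  have fx: "((\<lambda>x. f x 0) has_derivative (*) A) (at 0 within UNIV)"
    using A by (simp add: has_field_derivative_def)
  have fy: "((\<lambda>s. f x s) has_derivative blinfun_apply (blinfun_mult_left (D x s)))
      (at s within UNIV)"
    if "x \<in> UNIV" "s \<in> UNIV" for x s
    using D[of x s] by (simp add: has_field_derivative_def mult.commute[of _ "D x s"])
  have cont:
    "continuous (at (0, 0) within UNIV \<times> UNIV) (\<lambda>(x, s). blinfun_mult_left (D x s))"
    using C by (simp add: split_beta' continuous_intros)
  from has_derivative_partialsI[OF fx fy cont UNIV_I convex_UNIV]
  have F: "((\<lambda>(x, s). f x s) has_derivative (\<lambda>(tx, ts). A * tx + ts * D 0 0)) (at (0, 0))"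
    by simp
  have diag: "((\<lambda>t. (t, c * t)) has_derivative (\<lambda>t. (t, c * t))) (at 0)"
    by (auto intro!: derivative_eq_intros)
  from diff_chain_at[OF diag] F
  have "((\<lambda>(x, s). f x s) \<circ> (\<lambda>t. (t, c * t)) has_derivative
         (\<lambda>(tx, ts). A * tx + ts * D 0 0) \<circ> (\<lambda>t. (t, c * t))) (at 0)"
    by simp
  then have "((\<lambda>x. f x (c * x)) has_derivative (\<lambda>t. A * t + c * t * D 0 0)) (at 0)"
    by (simp add: o_def)
  moreover have "(\<lambda>t. A * t + c * t * D 0 0) = (*) (A + c * D 0 0)"
    by (auto simp: fun_eq_iff algebra_simps)
  ultimately show ?thesis
    by (simp add: has_field_derivative_def)
qed

lemma C2_partial_derivative:
  fixes g :: "'a::euclidean_space \<Rightarrow> real"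
  assumes g: "C2 g" and i: "i \<in> Basis"
  shows "((\<lambda>x. g (q + x *\<^sub>R i)) has_real_derivative pd g i (q + s *\<^sub>R i)) (at s)"
proof -
  define q' where "q' = q + s *\<^sub>R i"
  have "(\<lambda>x. g (q' + x *\<^sub>R i)) differentiable (at 0)" using g i unfolding C2_def by blast
  then have d0: "((\<lambda>x. g (q' + x *\<^sub>R i)) has_real_derivative pd g i q') (at 0)"
    unfolding pd_def by (simp add: DERIV_deriv_iff_real_differentiable)
  have "((\<lambda>x. g (q' + (x - s) *\<^sub>R i)) has_real_derivative pd g i q' * 1) (at s)"
    by (rule DERIV_chain'[of "\<lambda>x. x - s", where g = "\<lambda>y. g (q' + y *\<^sub>R i)"])
      (auto intro!: derivative_eq_intros simp: d0)
  moreover have "q' + (x - s) *\<^sub>R i = q + x *\<^sub>R i" for x by (simp add: q'_def scaleR_diff_left)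
  ultimately show ?thesis by (simp add: q'_def add.assoc)
qed

lemma C2_directional_derivative_step:
  fixes g :: "'a::euclidean_space \<Rightarrow> real"
  assumes g: "C2 g" and i: "i \<in> Basis"
    and A: "((\<lambda>x. g (p + x *\<^sub>R u)) has_real_derivative A) (at 0)"
  shows "((\<lambda>x. g (p + x *\<^sub>R (u + c *\<^sub>R i))) has_real_derivative A + c * pd g i p) (at 0)"
proof -
  have pd_cont: "isCont (pd g i) q" for q
    using g i unfolding C2_def by (simp add: continuous_on_eq_continuous_at)
  have cont: "isCont (\<lambda>z. pd g i (p + fst z *\<^sub>R u + snd z *\<^sub>R i)) (0, 0)"
    by (rule isCont_o2[OF _ pd_cont]) (intro continuous_intros)
  have "((\<lambda>x. g (p + x *\<^sub>R u + (c * x) *\<^sub>R i)) has_real_derivative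
         A + c * pd g i (p + 0 *\<^sub>R u + 0 *\<^sub>R i)) (at 0)"
  proof (rule diagonal_derivative[where D = "\<lambda>x s. pd g i (p + x *\<^sub>R u + s *\<^sub>R i)"])
    show "((\<lambda>x. g (p + x *\<^sub>R u + 0 *\<^sub>R i)) has_real_derivative A) (at 0)"
      using A by simp
    fix x s
    show "((\<lambda>s. g (p + x *\<^sub>R u + s *\<^sub>R i)) has_real_derivative
            pd g i (p + x *\<^sub>R u + s *\<^sub>R i)) (at s)"
      by (rule C2_partial_derivative[OF g i])
  qed (fact cont)
  then show ?thesis by (simp add: algebra_simps)
qed

lemma C2_directional_derivative:
  fixes g :: "real \<times> real \<times> real \<Rightarrow> real"
  assumes g: "C2 g"
  shows "((\<lambda>\<epsilon>. g (p + \<epsilon> *\<^sub>R (d1, d2, d3))) has_real_derivative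
           d1 * pd g (1, 0, 0) p + d2 * pd g (0, 1, 0) p + d3 * pd g (0, 0, 1) p) (at 0)"
proof -
  have basis: "(1, 0, 0) \<in> (Basis :: (real \<times> real \<times> real) set)"
    "(0, 1, 0) \<in> (Basis :: (real \<times> real \<times> real) set)"
    "(0, 0, 1) \<in> (Basis :: (real \<times> real \<times> real) set)"
    by (auto simp: Basis_prod_def zero_prod_def)
  have "((\<lambda>\<epsilon>. g (p + \<epsilon> *\<^sub>R 0)) has_real_derivative 0) (at 0)" by simp
  from C2_directional_derivative_step[OF g basis(3)
      C2_directional_derivative_step[OF g basis(2) C2_directional_derivative_step[OF g basis(1) this]]]
  have "((\<lambda>\<epsilon>. g (p + \<epsilon> *\<^sub>R (0 + d1 *\<^sub>R (1, 0, 0) + d2 *\<^sub>R (0, 1, 0) + d3 *\<^sub>R (0, 0, 1))))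
      has_real_derivative
        0 + d1 * pd g (1, 0, 0) p + d2 * pd g (0, 1, 0) p + d3 * pd g (0, 0, 1) p) (at 0)" .
  moreover have "0 + d1 *\<^sub>R (1, 0, 0) + d2 *\<^sub>R (0, 1, 0) + d3 *\<^sub>R (0, 0, 1) = (d1, d2, d3)"
    by (simp add: zero_prod_def)
  ultimately show ?thesis by simp
qed

lemma lfsum_add: "lfsum a h \<nu> (\<lambda>s. F s + e * G s) t = lfsum a h \<nu> F t + e * lfsum a h \<nu> G t"
  unfolding lfsum_def dint_def by (simp add: sum.distrib sum_distrib_left algebra_simps)

lemma rfsum_add: "rfsum h c \<nu> (\<lambda>s. F s + e * G s) t = rfsum h c \<nu> F t + e * rfsum h c \<nu> G t"
  unfolding rfsum_def dint_def by (simp add: sum.distrib sum_distrib_left algebra_simps)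

lemma lfdiff_add: "lfdiff a h \<alpha> (\<lambda>s. F s + e * G s) t = lfdiff a h \<alpha> F t + e * lfdiff a h \<alpha> G t"
  unfolding lfdiff_def lfsum_add by (simp add: algebra_simps diff_divide_distrib add_divide_distrib)

lemma rfdiff_add: "rfdiff h c \<alpha> (\<lambda>s. F s + e * G s) t = rfdiff h c \<alpha> F t + e * rfdiff h c \<alpha> G t"
  unfolding rfdiff_def rfsum_add by (simp add: algebra_simps diff_divide_distrib add_divide_distrib)

lemma lfdiff_scale: "lfdiff a h \<alpha> (\<lambda>s. e * G s) t = e * lfdiff a h \<alpha> G t"
  using lfdiff_add[of a h \<alpha> "\<lambda>s. 0" e G t] by (simp add: lfdiff_def lfsum_def dint_def)

lemma rfdiff_scale: "rfdiff h c \<alpha> (\<lambda>s. e * G s) t = e * rfdiff h c \<alpha> G t"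
  using rfdiff_add[of h c \<alpha> "\<lambda>s. 0" e G t] by (simp add: rfdiff_def rfsum_def dint_def)

lemma Max_abs_scale:
  fixes f :: "'a \<Rightarrow> real"
  assumes "finite S" "S \<noteq> {}"
  shows "Max ((\<lambda>t. \<bar>e * f t\<bar>) ` S) = \<bar>e\<bar> * Max ((\<lambda>t. \<bar>f t\<bar>) ` S)"
proof -
  have "mono ((*) \<bar>e\<bar>)" by (intro monoI mult_left_mono) simp_all
  from mono_Max_commute[OF this, of "(\<lambda>t. \<bar>f t\<bar>) ` S"] assms
  show ?thesis by (simp add: image_image abs_mult)
qed

lemma tscale_k_image: "tscale_k a h k = (\<lambda>j. a + real j * h) ` {..<k}"
  by (auto simp: tscale_k_def)

lemma ynorm_scale:
  assumes "k \<ge> 1"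
  shows "ynorm a h k \<alpha> \<beta> (\<lambda>t. e * G t) = \<bar>e\<bar> * ynorm a h k \<alpha> \<beta> G"
proof -
  have "finite (tscale_k a h k)" "tscale_k a h k \<noteq> {}"
    using assms by (auto simp: tscale_k_image lessThan_empty_iff)
  then show ?thesis
    unfolding ynorm_def lfdiff_scale rfdiff_scale by (simp add: Max_abs_scale distrib_left)
qed

lemma ynorm_nonneg:
  assumes "k \<ge> 1"
  shows "ynorm a h k \<alpha> \<beta> G \<ge> 0"
proof -
  have fin: "finite (tscale_k a h k)" and a: "a \<in> tscale_k a h k"
    using assms by (auto simp: tscale_k_image intro!: image_eqI[where x = 0])
  have "0 \<le> Max ((\<lambda>t. \<bar>F t\<bar>) ` tscale_k a h k)" for F :: "real \<Rightarrow> real"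
  proof -
    have "\<bar>F a\<bar> \<le> Max ((\<lambda>t. \<bar>F t\<bar>) ` tscale_k a h k)" using fin a by (intro Max_ge) auto
    then show ?thesis by linarith
  qed
  then show ?thesis unfolding ynorm_def by (simp add: add_nonneg_nonneg)
qed

definition first_variation ::
    "(real \<Rightarrow> real \<Rightarrow> real \<Rightarrow> real \<Rightarrow> real) \<Rightarrow> real \<Rightarrow> real \<Rightarrow> nat \<Rightarrow> real \<Rightarrow> real \<Rightarrow>
     (real \<Rightarrow> real) \<Rightarrow> (real \<Rightarrow> real) \<Rightarrow> real \<Rightarrow> real" where
  "first_variation L a h k \<alpha> \<beta> y \<eta> s =
       \<eta> (s + h) * Lu L s (y (s + h)) (lfdiff a h \<alpha> y s) (rfdiff h (a + real k * h) \<beta> y s)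
     + lfdiff a h \<alpha> \<eta> s * Lv L s (y (s + h)) (lfdiff a h \<alpha> y s) (rfdiff h (a + real k * h) \<beta> y s)
     + rfdiff h (a + real k * h) \<beta> \<eta> s * Lw L s (y (s + h)) (lfdiff a h \<alpha> y s) (rfdiff h (a + real k * h) \<beta> y s)"

lemma Lfun_variation_derivative:
  assumes h: "h > 0" and C2: "\<forall>t \<in> tscale_k a h k. C2 (uncurry3 (L t))"
  shows "((\<lambda>\<epsilon>. Lfun a h k \<alpha> \<beta> L (\<lambda>t. y t + \<epsilon> * \<eta> t)) has_real_derivative
           dint h a (a + real k * h) (first_variation L a h k \<alpha> \<beta> y \<eta>)) (at 0)"
proof -
  let ?t = "\<lambda>n. a + real n * h" and ?b = "a + real k * h"
  define P where "P n = (y (?t n + h), lfdiff a h \<alpha> y (?t n), rfdiff h ?b \<beta> y (?t n))" for n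
  define D where "D n = (\<eta> (?t n + h), lfdiff a h \<alpha> \<eta> (?t n), rfdiff h ?b \<beta> \<eta> (?t n))" for n
  have Lfun_eq: "Lfun a h k \<alpha> \<beta> L (\<lambda>t. y t + \<epsilon> * \<eta> t)
      = h * (\<Sum>n<k. uncurry3 (L (?t n)) (P n + \<epsilon> *\<^sub>R D n))" for \<epsilon>
    unfolding Lfun_def dint_grid[OF h] lfdiff_add rfdiff_add by (simp add: uncurry3_def P_def D_def)
  have "((\<lambda>\<epsilon>. h * (\<Sum>n<k. uncurry3 (L (?t n)) (P n + \<epsilon> *\<^sub>R D n))) has_real_derivative
           h * (\<Sum>n<k. first_variation L a h k \<alpha> \<beta> y \<eta> (?t n))) (at 0)"
  proof (intro DERIV_cmult DERIV_sum)
    fix n assume "n \<in> {..<k}"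
    then have "C2 (uncurry3 (L (?t n)))" using C2 by (auto simp: tscale_k_def)
    from C2_directional_derivative[OF this, of "P n" "\<eta> (?t n + h)" "lfdiff a h \<alpha> \<eta> (?t n)"
        "rfdiff h ?b \<beta> \<eta> (?t n)"]
    show "((\<lambda>\<epsilon>. uncurry3 (L (?t n)) (P n + \<epsilon> *\<^sub>R D n)) has_real_derivative
            first_variation L a h k \<alpha> \<beta> y \<eta> (?t n)) (at 0)"
      by (simp add: D_def P_def first_variation_def Lu_def Lv_def Lw_def)
  qed
  then show ?thesis unfolding Lfun_eq dint_grid[OF h] .
qed

(* Variations vanishing at both end points stay admissible and, for small eps,
   close to the minimiser in the norm, so eps = 0 is a local minimum. *)
lemma loc_min_variation:
  assumes k: "k \<ge> 1" and min: "loc_min a h k \<alpha> \<beta> L A B yh"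
    and \<eta>: "\<eta> a = 0" "\<eta> (a + real k * h) = 0"
  shows "\<exists>d>0. \<forall>\<epsilon>. \<bar>0 - \<epsilon>\<bar> < d \<longrightarrow>
           Lfun a h k \<alpha> \<beta> L (\<lambda>t. yh t + 0 * \<eta> t)
             \<le> Lfun a h k \<alpha> \<beta> L (\<lambda>t. yh t + \<epsilon> * \<eta> t)"
proof -
  obtain \<delta> where \<delta>: "\<delta> > 0"
    and lm: "\<And>y. y a = A \<Longrightarrow> y (a + real k * h) = B \<Longrightarrow>
                 ynorm a h k \<alpha> \<beta> (\<lambda>t. y t - yh t) < \<delta> \<Longrightarrow>
                 Lfun a h k \<alpha> \<beta> L yh \<le> Lfun a h k \<alpha> \<beta> L y"
    and ends: "yh a = A" "yh (a + real k * h) = B"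
    using min unfolding loc_min_def by blast
  define N where "N = ynorm a h k \<alpha> \<beta> \<eta>"
  have N: "N \<ge> 0" unfolding N_def by (rule ynorm_nonneg[OF k])
  show ?thesis
  proof (intro exI conjI allI impI)
    show "\<delta> / (N + 1) > 0" using \<delta> N by simp
    fix \<epsilon> :: real assume \<epsilon>: "\<bar>0 - \<epsilon>\<bar> < \<delta> / (N + 1)"
    have "ynorm a h k \<alpha> \<beta> (\<lambda>t. (yh t + \<epsilon> * \<eta> t) - yh t) = \<bar>\<epsilon>\<bar> * N"
      using ynorm_scale[OF k, of a h \<alpha> \<beta> \<epsilon> \<eta>] by (simp add: N_def)
    also have "\<dots> \<le> \<bar>\<epsilon>\<bar> * (N + 1)" by (simp add: mult_left_mono)
    also have "\<dots> < \<delta>" using \<epsilon> N by (simp add: pos_less_divide_eq)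
    finally have "Lfun a h k \<alpha> \<beta> L yh \<le> Lfun a h k \<alpha> \<beta> L (\<lambda>t. yh t + \<epsilon> * \<eta> t)"
      by (intro lm) (simp_all add: ends \<eta>)
    then show "Lfun a h k \<alpha> \<beta> L (\<lambda>t. yh t + 0 * \<eta> t)
        \<le> Lfun a h k \<alpha> \<beta> L (\<lambda>t. yh t + \<epsilon> * \<eta> t)"
      by simp
  qed
qed

lemma first_variation_vanishes:
  assumes h: "h > 0" and k: "k \<ge> 1" and C2: "\<forall>t \<in> tscale_k a h k. C2 (uncurry3 (L t))"
    and min: "loc_min a h k \<alpha> \<beta> L A B yh"
    and \<eta>: "\<eta> a = 0" "\<eta> (a + real k * h) = 0"
  shows "dint h a (a + real k * h) (first_variation L a h k \<alpha> \<beta> yh \<eta>) = 0"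
  using loc_min_variation[OF k min \<eta>] DERIV_local_min[OF Lfun_variation_derivative[OF h C2]]
  by blast

lemma first_variation_impulse:
  assumes h: "h > 0" and j: "Suc j < k"
  shows "dint h a (a + real k * h) (first_variation L a h k \<alpha> \<beta> y (impulse a h (Suc j)))
     = h * (Lu L (a + real j * h) (y (a + real j * h + h)) (lfdiff a h \<alpha> y (a + real j * h))
               (rfdiff h (a + real k * h) \<beta> y (a + real j * h))
          + rfdiff h (a + real k * h - h) \<alpha>
              (\<lambda>s. Lv L s (y (s + h)) (lfdiff a h \<alpha> y s) (rfdiff h (a + real k * h) \<beta> y s))
              (a + real j * h)
          + lfdiff a h \<beta>
              (\<lambda>s. Lw L s (y (s + h)) (lfdiff a h \<alpha> y s) (rfdiff h (a + real k * h) \<beta> y s))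
              (a + real j * h))"
proof -
  let ?U = "\<lambda>s. Lu L s (y (s + h)) (lfdiff a h \<alpha> y s) (rfdiff h (a + real k * h) \<beta> y s)"
  let ?V = "\<lambda>s. Lv L s (y (s + h)) (lfdiff a h \<alpha> y s) (rfdiff h (a + real k * h) \<beta> y s)"
  let ?Z = "\<lambda>s. Lw L s (y (s + h)) (lfdiff a h \<alpha> y s) (rfdiff h (a + real k * h) \<beta> y s)"
  show ?thesis
    unfolding dint_grid[OF h] first_variation_def sum.distrib
      impulse_shift_sum[OF h Suc_lessD[OF j], where U = ?U]
      impulse_lfdiff_sum[OF h j, where V = ?V] impulse_rfdiff_sum[OF h j, where Z = ?Z] ..
qed

theorem mainTheorem11:
  fixes a h \<alpha> \<beta> A B :: real and k :: nat
    and L :: "real \<Rightarrow> real \<Rightarrow> real \<Rightarrow> real \<Rightarrow> real"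
    and yh :: "real \<Rightarrow> real"
  assumes "h > 0" and "k \<ge> 2"
    and "0 < \<alpha>" "\<alpha> \<le> 1" "0 < \<beta>" "\<beta> \<le> 1"
    and "\<forall>t \<in> tscale_k a h k. C2 (uncurry3 (L t))"
    and "loc_min a h k \<alpha> \<beta> L A B yh"
  shows "\<forall>t \<in> tscale_k2 a h k.
     Lu L t (yh (t + h)) (lfdiff a h \<alpha> yh t) (rfdiff h (a + real k * h) \<beta> yh t)
   + rfdiff h (a + real k * h - h) \<alpha>
       (\<lambda>s. Lv L s (yh (s + h)) (lfdiff a h \<alpha> yh s) (rfdiff h (a + real k * h) \<beta> yh s)) t
   + lfdiff a h \<beta>
       (\<lambda>s. Lw L s (yh (s + h)) (lfdiff a h \<alpha> yh s) (rfdiff h (a + real k * h) \<beta> yh s)) t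
   = 0"
proof -
  have h: "h > 0" and k: "k \<ge> 1" using assms(1,2) by simp_all
  have "dint h a (a + real k * h) (first_variation L a h k \<alpha> \<beta> yh (impulse a h (Suc j))) = 0"
    if "Suc j < k" for j
  proof (rule first_variation_vanishes[OF h k assms(7,8)])
    show "impulse a h (Suc j) a = 0" "impulse a h (Suc j) (a + real k * h) = 0"
      using impulse_grid[OF h, of a "Suc j" 0] impulse_grid[OF h, of a "Suc j" k] that
      by simp_all
  qed
  then show ?thesis
    using h by (auto simp: tscale_k2_def first_variation_impulse)
qed

end
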